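(* Let $n, m, k, l, s, t$ be positive integers with $\min\{m,n\}\geq (t+1)(k-t+1)$, $k\geq l\geq t+1\geq 4$ and $t+3\leq s \leq k+1$. Then \[(t+1)(k-s+2)(m-l+t-s+2)-(s-1-t)\big((m-l+t-s+1)(n-k-1)-(k-s+2)(l-t)\big)<0.\] *)

theory Defs
  imports Main
begin

end

theory Submission
  imports Defs
begin

text \<open>Write \<open>a = s - 1 - t\<close>, \<open>b = k - s + 2\<close>, \<open>M = m - l + t - s + 1\<close>,
  \<open>N = n - k - 1\<close> and \<open>X = k - t\<close>; the claim becomes \<open>(t + 1) b (M + 1) < a (M N - b (l - t))\<close>.
  The hypothesis on \<open>min m n\<close> gives \<open>N \<ge> t X\<close> and \<open>M \<ge> 2a + b\<close>, and with \<open>l - t \<le> X\<close>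
  the right-hand side is at least \<open>a X (t M - b) \<ge> 2 (b + 1) (t - 1) M\<close>, which beats the
  left-hand side because \<open>2 (t - 1) \<ge> t + 1\<close> and \<open>M > b\<close>.\<close>

lemma mult_diff_lower_bound:
  fixes a b d M N X t :: "'a::linordered_idom"
  assumes "a \<ge> 0" "b \<ge> 0" "M \<ge> 0" "N \<ge> t * X" "d \<le> X"
  shows "a * X * (t * M - b) \<le> a * (M * N - b * d)"
proof -
  have "a * M * (t * X) \<le> a * M * N"
    using assms by (intro mult_left_mono) auto
  moreover have "a * b * d \<le> a * b * X"
    using assms by (intro mult_left_mono) auto
  ultimately show ?thesis
    by (simp add: algebra_simps)
qed

lemma lower_bound_dominates:
  fixes a b M X t :: "'a::linordered_idom"
  assumes "a \<ge> 2" "b \<ge> 0" "t \<ge> 3" "X \<ge> b + 1" "M > b"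
  shows "(t + 1) * b * (M + 1) < a * X * (t * M - b)"
proof -
  have "b * (M + 1) < (b + 1) * M"
    using assms by (simp add: algebra_simps)
  then have "(t + 1) * b * (M + 1) < (t + 1) * ((b + 1) * M)"
    using assms by (simp add: mult.assoc)
  also have "\<dots> \<le> (2 * (t - 1)) * ((b + 1) * M)"
    using assms by (intro mult_right_mono) auto
  also have "\<dots> = (2 * (b + 1)) * ((t - 1) * M)"
    by (simp add: algebra_simps)
  also have "\<dots> \<le> (a * X) * ((t - 1) * M)"
    using assms by (intro mult_right_mono mult_mono) auto
  also have "\<dots> \<le> (a * X) * (t * M - b)"
    using assms by (intro mult_left_mono) (auto simp: algebra_simps)
  finally show ?thesis
    by (simp add: mult.assoc)
qed

theorem lemma3p2:
  fixes n m k l s t :: int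
  assumes "n > 0" and "m > 0" and "k > 0" and "l > 0" and "s > 0" and "t > 0"
    and "min m n \<ge> (t + 1) * (k - t + 1)"
    and "k \<ge> l" and "l \<ge> t + 1" and "t + 1 \<ge> 4"
    and "t + 3 \<le> s" and "s \<le> k + 1"
  shows "(t + 1) * (k - s + 2) * (m - l + t - s + 2)
           - (s - 1 - t) * ((m - l + t - s + 1) * (n - k - 1) - (k - s + 2) * (l - t)) < 0"
proof -
  define a where "a = s - 1 - t"
  define b where "b = k - s + 2"
  define M where "M = m - l + t - s + 1"
  define N where "N = n - k - 1"
  define X where "X = k - t"
  have a: "a \<ge> 2" and b: "b \<ge> 1" and t: "t \<ge> 3" and X: "X \<ge> b + 1"
    using assms by (auto simp: a_def b_def X_def)
  have "X + 1 = k - t + 1" and "a + b = k - t + 1"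
    by (simp_all add: X_def a_def b_def)
  then have "(t + 1) * (X + 1) \<le> n" and m_bound: "(t + 1) * (a + b) \<le> m"
    using assms(7) by simp_all
  then have N: "N \<ge> t * X"
    by (simp add: N_def X_def algebra_simps)
  have "(t - 3) * a + (t - 1) * (b - 1) \<ge> 0"
    using a b t by simp
  then have M: "M > b"
    using m_bound assms(8) a by (simp add: M_def a_def b_def algebra_simps)
  have "l - t \<le> X"
    using assms(8) by (simp add: X_def)
  then have "(t + 1) * b * (M + 1) < a * (M * N - b * (l - t))"
    using lower_bound_dominates[OF a _ t X M] mult_diff_lower_bound[of a b M t X N "l - t"] a b M N
    by linarith
  then show ?thesis
    by (simp add: a_def b_def M_def N_def algebra_simps)
qed

end
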